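(* If $H=(S_0,e_0,S_1,e_1,\dots)$ is a history sequence of the Simpler Lazy Set algorithm, then the structure $M_H$ (with $\gamma$ as defined in the context) satisfies the Lazy Set axioms A0, A1, A2.
   Context: Simpler Lazy Set algorithm. Fix a countably infinite set $A$ of addresses with distinguished $\mathsf H,\mathsf T$; $\mathrm{Number}=\mathbb N\cup\{-1,\infty\}$. A state $S$: set $\mathrm{Active}^S\subseteq A$, $\mathrm{Next}^S:\mathrm{Active}^S\setminus\{\mathsf T\}\to A$, $\mathrm{Val}^S:\mathrm{Active}^S\to\mathrm{Number}$, and for each process $p$: $PC_p\in\{0,1,2,3.1,\dots,3.5\}$, $x_p\in\mathbb N$, $\mathrm{curr}_p\in A$, $\mathrm{status}_p$. $S$ is normal if $\mathrm{Active}^S$ is finite, $\mathsf H,\mathsf T$ are active with values $-1,\infty$, other active addresses have values in $\mathbb N$, and for active $a\neq\mathsf T$, $\mathrm{Next}(a)$ is active with $\mathrm{Val}(a)<\mathrm{Val}(\mathrm{Next}(a))$. The main branch is the path of $\mathrm{Next}$-links from $\mathsf H$ to $\mathsf T$. Initial state: $\mathrm{Active}=\{\mathsf H,\mathsf T\}$, $\mathrm{Next}(\mathsf H)=\mathsf T$, all $PC_p=0$. Steps $(S,e,T)$ of a process $p$ on a normal $S$: (i) invocation: $PC_p$ from $0$ to $1$, $2$ or $3.1$, with $x_p\in\mathbb N$ arbitrary; (ii) failure: $PC_p$ from $1$ or $2$ to $0$ with $\chi(e)=f$, nothing else changes; (iii) $\mathrm{AD}(x)$ ($x=x_p$, $PC_p$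 from $1$ to $0$): with $\mathfrak p$ the main-branch address having $\mathrm{Val}(\mathfrak p)<x\le\mathrm{Val}(\mathrm{Next}(\mathfrak p))$: if $\mathrm{Val}(\mathrm{Next}(\mathfrak p))=x$, no other change, $\chi(e)=1$, $\mathrm{adr}(e)=\mathrm{Next}^S(\mathfrak p)$; else a new address $a\notin\mathrm{Active}^S$ is made active with $\mathrm{Val}(a)=x$, $\mathrm{Next}^T(\mathfrak p)=a$, $\mathrm{Next}^T(a)=\mathrm{Next}^S(\mathfrak p)$, $\chi(e)=0$, $\mathrm{adr}(e)=a$; (iv) $\mathrm{RM}(x)$ ($PC_p$ from $2$ to $0$): if the main branch has an address $cu$ of value $x$, with $pred$ its main-branch predecessor, set $\mathrm{Next}^T(pred)=\mathrm{Next}^S(cu)$, $\chi(e)=1$, $\mathrm{adr}(e)=cu$; else no change, $\chi(e)=0$; (v) CONTAINS$(x)$ lines, each an atomic step: 3.1 $\mathrm{curr}_p:=\mathsf H$; 3.2/3.3 $\mathrm{curr}_p:=\mathrm{Next}(\mathrm{curr}_p)$; 3.4 if $\mathrm{Val}(\mathrm{curr}_p)\ge x$ go to 3.5 else to 3.3; 3.5 return $1$ if $\mathrm{Val}(\mathrm{curr}_p)=x$ else $0$, $PC_p:=0$. A history sequence is $(S_0,e_0,S_1,\dots)$ with $S_0$ initial and each $(S_i,e_i,S_{i+1})$ a step of some process. Every active address $a\notin\{\mathsf H,\mathsf T\}$ has a unique activating step $\mathrm{activation}(a)$: the $\mathrm{AD}$ action $e_i$ with $\chi(e_i)=0$ and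 $\mathrm{adr}(e_i)=a$. Structure $M_H$: its actions are the $e_i$, ordered by $e_i<e_j$ iff $i<j$; its high-level events are the CONTAINS$(x)$ operation executions $E$ (the set of actions of one process executing one CONTAINS protocol), with $\mathrm{Begin}(E)$ its first action (line 3.1) and $\mathrm{End}(E)$ its last (return) action; $\mathrm{Begin}(e)=\mathrm{End}(e)=e$ for actions; for events $X<Y$ iff $\mathrm{End}(X)<\mathrm{Begin}(Y)$. $\mathrm{Add}(e)$ iff $e$ is an $\mathrm{AD}$ action (including failures at line 1), $\mathrm{Rem}(e)$ iff $e$ is an $\mathrm{RM}$ action (including failures at line 2), $\mathrm{Cnt}(E)$ iff $E$ is a CONTAINS execution; $\mathrm{val}$ is the parameter $x$ and $\chi$ the returned status. $\gamma$: for an $\mathrm{AD}$ or $\mathrm{RM}$ action $e$ with $\chi(e)=1$, $\gamma(e)=\mathrm{activation}(\mathrm{adr}(e))$; for a CONTAINS execution $E$ with $\chi(E)=1$, whose variable $\mathrm{curr}$ takes final value $a_m$ (an active address of value $x$), $\gamma(E)=\mathrm{activation}(a_m)$. Notation: $\mathrm{Add}^p(a)$ abbreviates $\mathrm{Add}(a)\wedge\chi(a)=p$, similarly $\mathrm{Rem}^p,\mathrm{Cnt}^p$; $\mathrm{Op}^p(a)$ abbreviates $(\mathrm{Add}(a)\vee\mathrm{Rem}(a)\vee\mathrm{Cnt}(a))\wedge\chi(a)=p$, $p\in\{0,1\}$. A0: $\mathrm{Add},\mathrm{Rem},\mathrm{Cnt}$ pairwise disjoint; $\mathrm{Add},\mathrm{Rem}$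 events are actions, $\mathrm{Cnt}$ events high-level; $\mathrm{Begin}(X),\mathrm{End}(X)$ are actions; $\mathrm{Begin}(E)<\mathrm{End}(E)$ for $\mathrm{Cnt}$ events; $<$ is linear on actions. A1: for every $A$ with $\mathrm{Op}^1(A)$: $\mathrm{Add}^0(\gamma(A))$, $\mathrm{val}(\gamma(A))=\mathrm{val}(A)$, $\gamma(A)<\mathrm{End}(A)$, and no $R$ has $\mathrm{Rem}^1(R)$, $\gamma(R)=\gamma(A)$, $\gamma(A)<R<A$. A2: if $\mathrm{Op}^0(B)$, $\mathrm{Add}^0(A)$, $A<B$, $\mathrm{val}(A)=\mathrm{val}(B)$, then some $R$ has $\mathrm{Rem}^1(R)$, $A=\gamma(R)$, $R<\mathrm{End}(B)$. *)

theory Defs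
  imports Main "HOL-Library.Countable_Set" "HOL-Library.Extended_Nat"
begin

datatype lnum = MinusOne | Num nat | Infty

fun nless :: "lnum \<Rightarrow> lnum \<Rightarrow> bool" where
  "nless MinusOne y = (y \<noteq> MinusOne)"
| "nless (Num a) (Num b) = (a < b)"
| "nless (Num a) Infty = True"
| "nless (Num a) MinusOne = False"
| "nless Infty y = False"

definition nle :: "lnum \<Rightarrow> lnum \<Rightarrow> bool" where
  "nle x y \<longleftrightarrow> nless x y \<or> x = y"

text \<open>Returned status: 0, 1 or f (failure).\<close>
datatype chi = C0 | C1 | CF

datatype pcv = P0 | P1 | P2 | P31 | P32 | P33 | P34 | P35

record ('a, 'p) st =
  Active :: "'a set"
  Nxt    :: "'a \<Rightarrow> 'a"      \<comment> \<open>only meaningful on Active - {T}\<close>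
  Val    :: "'a \<Rightarrow> lnum"    \<comment> \<open>only meaningful on Active\<close>
  PC     :: "'p \<Rightarrow> pcv"
  Xp     :: "'p \<Rightarrow> nat"
  Curr   :: "'p \<Rightarrow> 'a"
  Status :: "'p \<Rightarrow> chi"

text \<open>Kinds of actions.  KAdd: the atomic step at line 1 (either AD(x) or failure);
  KRem: the atomic step at line 2 (either RM(x) or failure); KInv: invocation;
  KL31..KL35: the lines of CONTAINS.\<close>
datatype kind = KInv | KAdd | KRem | KL31 | KL32 | KL33 | KL34 | KL35

record ('a, 'p) label =
  eproc :: 'p
  ekind :: kind
  echi  :: chi
  eadr  :: 'a

definition normal :: "'a \<Rightarrow> 'a \<Rightarrow> ('a, 'p) st \<Rightarrow> bool" where
  "normal Hd Tl S \<longleftrightarrow>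
     finite (Active S) \<and> Hd \<in> Active S \<and> Tl \<in> Active S \<and>
     Val S Hd = MinusOne \<and> Val S Tl = Infty \<and>
     (\<forall>a \<in> Active S - {Hd, Tl}. \<exists>k. Val S a = Num k) \<and>
     (\<forall>a \<in> Active S - {Tl}. Nxt S a \<in> Active S \<and> nless (Val S a) (Val S (Nxt S a)))"

definition on_main :: "'a \<Rightarrow> 'a \<Rightarrow> ('a, 'p) st \<Rightarrow> 'a \<Rightarrow> bool" where
  "on_main Hd Tl S a \<longleftrightarrow>
     (\<exists>m. (Nxt S ^^ m) Hd = a \<and> (\<forall>k<m. (Nxt S ^^ k) Hd \<noteq> Tl))"

definition init_state :: "'a \<Rightarrow> 'a \<Rightarrow> ('a, 'p) st \<Rightarrow> bool" where
  "init_state Hd Tl S \<longleftrightarrow>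
     Active S = {Hd, Tl} \<and> Nxt S Hd = Tl \<and> Val S Hd = MinusOne \<and> Val S Tl = Infty \<and>
     (\<forall>p. PC S p = P0)"

definition step :: "'a \<Rightarrow> 'a \<Rightarrow> ('a, 'p) st \<Rightarrow> ('a, 'p) label \<Rightarrow> ('a, 'p) st \<Rightarrow> bool" where
  "step Hd Tl S e S' \<longleftrightarrow> normal Hd Tl S \<and>
    (let p = eproc e; x = Xp S p; st' = (\<lambda>c. (Status S)(p := c)) in
     case ekind e of
       KInv \<Rightarrow> PC S p = P0 \<and>
          (\<exists>pc' x'. pc' \<in> {P1, P2, P31} \<and>
             S' = S\<lparr>PC := (PC S)(p := pc'), Xp := (Xp S)(p := x')\<rparr>)
     | KAdd \<Rightarrow> PC S p = P1 \<and>
          ((echi e = CF \<and> S' = S\<lparr>PC := (PC S)(p := P0), Status := st' CF\<rparr>) \<or>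
           (\<exists>pp. on_main Hd Tl S pp \<and> pp \<noteq> Tl \<and>
              nless (Val S pp) (Num x) \<and> nle (Num x) (Val S (Nxt S pp)) \<and>
              ((Val S (Nxt S pp) = Num x \<and> echi e = C1 \<and> eadr e = Nxt S pp \<and>
                S' = S\<lparr>PC := (PC S)(p := P0), Status := st' C1\<rparr>) \<or>
               (Val S (Nxt S pp) \<noteq> Num x \<and> echi e = C0 \<and> eadr e \<notin> Active S \<and>
                S' = S\<lparr>Active := insert (eadr e) (Active S),
                       Nxt := (Nxt S)(pp := eadr e, eadr e := Nxt S pp),
                       Val := (Val S)(eadr e := Num x),
                       PC := (PC S)(p := P0), Status := st' C0\<rparr>))))
     | KRem \<Rightarrow> PC S p = P2 \<and>
          ((echi e = CF \<and> S' = S\<lparr>PC := (PC S)(p := P0), Status := st' CF\<rparr>) \<or>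
           (\<exists>cu pred. on_main Hd Tl S cu \<and> Val S cu = Num x \<and>
              on_main Hd Tl S pred \<and> pred \<noteq> Tl \<and> Nxt S pred = cu \<and>
              echi e = C1 \<and> eadr e = cu \<and>
              S' = S\<lparr>Nxt := (Nxt S)(pred := Nxt S cu),
                     PC := (PC S)(p := P0), Status := st' C1\<rparr>) \<or>
           ((\<nexists>cu. on_main Hd Tl S cu \<and> Val S cu = Num x) \<and> echi e = C0 \<and>
              S' = S\<lparr>PC := (PC S)(p := P0), Status := st' C0\<rparr>))
     | KL31 \<Rightarrow> PC S p = P31 \<and>
          S' = S\<lparr>Curr := (Curr S)(p := Hd), PC := (PC S)(p := P32)\<rparr>
     | KL32 \<Rightarrow> PC S p = P32 \<and>
          S' = S\<lparr>Curr := (Curr S)(p := Nxt S (Curr S p)), PC := (PC S)(p := P34)\<rparr>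
     | KL33 \<Rightarrow> PC S p = P33 \<and>
          S' = S\<lparr>Curr := (Curr S)(p := Nxt S (Curr S p)), PC := (PC S)(p := P34)\<rparr>
     | KL34 \<Rightarrow> PC S p = P34 \<and>
          S' = S\<lparr>PC := (PC S)(p := (if nle (Num x) (Val S (Curr S p)) then P35 else P33))\<rparr>
     | KL35 \<Rightarrow> PC S p = P35 \<and>
          echi e = (if Val S (Curr S p) = Num x then C1 else C0) \<and>
          S' = S\<lparr>PC := (PC S)(p := P0), Status := st' (echi e)\<rparr>)"

text \<open>A history sequence (S_0, e_0, S_1, e_1, ...) with n actions (n = \<infinity> for infinite histories).\<close>
definition history :: "'a \<Rightarrow> 'a \<Rightarrow> (nat \<Rightarrow> ('a, 'p) st) \<Rightarrow> (nat \<Rightarrow> ('a, 'p) label) \<Rightarrow> enat \<Rightarrow> bool" where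
  "history Hd Tl S e n \<longleftrightarrow> init_state Hd Tl (S 0) \<and>
     (\<forall>i. enat i < n \<longrightarrow> step Hd Tl (S i) (e i) (S (Suc i)))"

record 'e lsstruct =
  Ev      :: "'e set"      \<comment> \<open>all events (actions and high-level events)\<close>
  Actions :: "'e set"
  lt      :: "'e \<Rightarrow> 'e \<Rightarrow> bool"
  Begin   :: "'e \<Rightarrow> 'e"
  End     :: "'e \<Rightarrow> 'e"
  IsAdd   :: "'e \<Rightarrow> bool"
  IsRem   :: "'e \<Rightarrow> bool"
  IsCnt   :: "'e \<Rightarrow> bool"
  val     :: "'e \<Rightarrow> nat"
  chi     :: "'e \<Rightarrow> chi"
  gamma   :: "'e \<Rightarrow> 'e"

definition evless :: "'e lsstruct \<Rightarrow> 'e \<Rightarrow> 'e \<Rightarrow> bool" where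
  "evless M X Y \<longleftrightarrow> lt M (End M X) (Begin M Y)"

definition Op :: "'e lsstruct \<Rightarrow> chi \<Rightarrow> 'e \<Rightarrow> bool" where
  "Op M c A \<longleftrightarrow> (IsAdd M A \<or> IsRem M A \<or> IsCnt M A) \<and> chi M A = c"

definition A0 :: "'e lsstruct \<Rightarrow> bool" where
  "A0 M \<longleftrightarrow>
     Actions M \<subseteq> Ev M \<and>
     (\<forall>X\<in>Ev M. \<not> (IsAdd M X \<and> IsRem M X) \<and> \<not> (IsAdd M X \<and> IsCnt M X) \<and>
                 \<not> (IsRem M X \<and> IsCnt M X)) \<and>
     (\<forall>X\<in>Ev M. (IsAdd M X \<or> IsRem M X) \<longrightarrow> X \<in> Actions M) \<and>
     (\<forall>X\<in>Ev M. IsCnt M X \<longrightarrow> X \<notin> Actions M) \<and>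
     (\<forall>X\<in>Ev M. Begin M X \<in> Actions M \<and> End M X \<in> Actions M) \<and>
     (\<forall>E\<in>Ev M. IsCnt M E \<longrightarrow> lt M (Begin M E) (End M E)) \<and>
     (\<forall>a\<in>Actions M. \<not> lt M a a) \<and>
     (\<forall>a\<in>Actions M. \<forall>b\<in>Actions M. \<forall>c\<in>Actions M. lt M a b \<longrightarrow> lt M b c \<longrightarrow> lt M a c) \<and>
     (\<forall>a\<in>Actions M. \<forall>b\<in>Actions M. lt M a b \<or> a = b \<or> lt M b a)"

definition A1 :: "'e lsstruct \<Rightarrow> bool" where
  "A1 M \<longleftrightarrow>
     (\<forall>A\<in>Ev M. Op M C1 A \<longrightarrow>
        gamma M A \<in> Ev M \<and> IsAdd M (gamma M A) \<and> chi M (gamma M A) = C0 \<and>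
        val M (gamma M A) = val M A \<and> evless M (gamma M A) (End M A) \<and>
        \<not> (\<exists>R\<in>Ev M. IsRem M R \<and> chi M R = C1 \<and> gamma M R = gamma M A \<and>
                      evless M (gamma M A) R \<and> evless M R A))"

definition A2 :: "'e lsstruct \<Rightarrow> bool" where
  "A2 M \<longleftrightarrow>
     (\<forall>B\<in>Ev M. \<forall>A\<in>Ev M.
        Op M C0 B \<and> IsAdd M A \<and> chi M A = C0 \<and> evless M A B \<and> val M A = val M B \<longrightarrow>
        (\<exists>R\<in>Ev M. IsRem M R \<and> chi M R = C1 \<and> gamma M R = A \<and> evless M R (End M B)))"

text \<open>Events of M_H: the action e_i (Act i), and CONTAINS executions (CntEx b r)
  given by the index b of its first action (line 3.1) and r of its return action (line 3.5).\<close>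
datatype hev = Act nat | CntEx nat nat

definition is_cnt_exec :: "(nat \<Rightarrow> ('a, 'p) label) \<Rightarrow> enat \<Rightarrow> nat \<Rightarrow> nat \<Rightarrow> bool" where
  "is_cnt_exec e n b r \<longleftrightarrow> b < r \<and> enat r < n \<and>
     ekind (e b) = KL31 \<and> ekind (e r) = KL35 \<and> eproc (e r) = eproc (e b) \<and>
     (\<forall>j. b < j \<and> j < r \<and> eproc (e j) = eproc (e b) \<longrightarrow> ekind (e j) \<in> {KL32, KL33, KL34})"

definition activation :: "(nat \<Rightarrow> ('a, 'p) label) \<Rightarrow> enat \<Rightarrow> 'a \<Rightarrow> hev" where
  "activation e n a =
     Act (THE i. enat i < n \<and> ekind (e i) = KAdd \<and> echi (e i) = C0 \<and> eadr (e i) = a)"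

fun hBegin :: "hev \<Rightarrow> hev" where
  "hBegin (Act i) = Act i"
| "hBegin (CntEx b r) = Act b"

fun hEnd :: "hev \<Rightarrow> hev" where
  "hEnd (Act i) = Act i"
| "hEnd (CntEx b r) = Act r"

fun hlt :: "hev \<Rightarrow> hev \<Rightarrow> bool" where
  "hlt (Act i) (Act j) = (i < j)"
| "hlt _ _ = False"

fun hAdd :: "(nat \<Rightarrow> ('a, 'p) label) \<Rightarrow> hev \<Rightarrow> bool" where
  "hAdd e (Act i) = (ekind (e i) = KAdd)"
| "hAdd e (CntEx b r) = False"

fun hRem :: "(nat \<Rightarrow> ('a, 'p) label) \<Rightarrow> hev \<Rightarrow> bool" where
  "hRem e (Act i) = (ekind (e i) = KRem)"
| "hRem e (CntEx b r) = False"

fun hCnt :: "hev \<Rightarrow> bool" where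
  "hCnt (Act i) = False"
| "hCnt (CntEx b r) = True"

fun hval :: "(nat \<Rightarrow> ('a, 'p) st) \<Rightarrow> (nat \<Rightarrow> ('a, 'p) label) \<Rightarrow> hev \<Rightarrow> nat" where
  "hval S e (Act i) = Xp (S i) (eproc (e i))"
| "hval S e (CntEx b r) = Xp (S b) (eproc (e b))"

fun hchi :: "(nat \<Rightarrow> ('a, 'p) label) \<Rightarrow> hev \<Rightarrow> chi" where
  "hchi e (Act i) = echi (e i)"
| "hchi e (CntEx b r) = echi (e r)"

text \<open>gamma: for AD/RM actions, activation of their address; for a CONTAINS execution,
  activation of the final value of curr (its value in the state in which the return
  action is executed).  Other values are irrelevant for the axioms.\<close>
fun hgamma :: "(nat \<Rightarrow> ('a, 'p) st) \<Rightarrow> (nat \<Rightarrow> ('a, 'p) label) \<Rightarrow> enat \<Rightarrow> hev \<Rightarrow> hev" where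
  "hgamma S e n (Act i) = activation e n (eadr (e i))"
| "hgamma S e n (CntEx b r) = activation e n (Curr (S r) (eproc (e r)))"

definition MH :: "(nat \<Rightarrow> ('a, 'p) st) \<Rightarrow> (nat \<Rightarrow> ('a, 'p) label) \<Rightarrow> enat \<Rightarrow> hev lsstruct" where
  "MH S e n =
    \<lparr> Ev = {Act i | i. enat i < n} \<union> {CntEx b r | b r. is_cnt_exec e n b r},
      Actions = {Act i | i. enat i < n},
      lt = hlt, Begin = hBegin, End = hEnd,
      IsAdd = hAdd e, IsRem = hRem e, IsCnt = hCnt,
      val = hval S e, chi = hchi e, gamma = hgamma S e n \<rparr>"

end

theory Submission
  imports Defs
begin

(* The main branch is a sorted list from H to T, and a step changes it in only three ways:
   a successful AD(x) links a fresh node of value x into its place, a successful RM(x) unlinks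
   the node of value x, and every other step leaves it alone.  Hence an address stays on the
   main branch until an RM removes it and never returns afterwards, and the Next-link of an
   address off the main branch is frozen.
   A1: a successful AD or RM finds its node on the main branch, so the node cannot have been
   removed before; a successful CONTAINS ends on a node that was on the main branch at some
   moment of its execution, because curr only follows links that its source had while it was
   on the main branch.
   A2: a node of value x activated before B and not removed before B ends is on the main
   branch throughout B.  An AD(x) or RM(x) then finds it, and a CONTAINS(x) cannot step over
   it, since every link it follows is a link of the sorted main branch at a moment when the
   node is on it. *)

instantiation lnum :: linorder
begin

definition less_lnum :: "lnum \<Rightarrow> lnum \<Rightarrow> bool" where
  "less_lnum = nless"

definition less_eq_lnum :: "lnum \<Rightarrow> lnum \<Rightarrow> bool" where
  "less_eq_lnum = nle"

instance
proof
  fix x y z :: lnum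
  show "x < y \<longleftrightarrow> x \<le> y \<and> \<not> y \<le> x"
    by (cases x; cases y) (auto simp: less_lnum_def less_eq_lnum_def nle_def)
  show "x \<le> x"
    by (simp add: less_eq_lnum_def nle_def)
  show "x \<le> y \<Longrightarrow> y \<le> z \<Longrightarrow> x \<le> z"
    by (cases x; cases y; cases z) (auto simp: less_eq_lnum_def nle_def)
  show "x \<le> y \<Longrightarrow> y \<le> x \<Longrightarrow> x = y"
    by (cases x; cases y) (auto simp: less_eq_lnum_def nle_def)
  show "x \<le> y \<or> y \<le> x"
    by (cases x; cases y) (auto simp: less_eq_lnum_def nle_def)
qed

end

lemma less_lnum_simps [simp]:
  "MinusOne < y \<longleftrightarrow> y \<noteq> MinusOne"
  "Num a < Num b \<longleftrightarrow> a < b"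
  "Num a < Infty"
  "\<not> x < MinusOne"
  "\<not> Infty < x"
  by (simp_all add: less_lnum_def) (cases x; simp)+

lemma nless_eq_less [simp]: "nless = (<)"
  by (simp add: less_lnum_def)

lemma nle_eq_le [simp]: "nle = (\<le>)"
  by (simp add: less_eq_lnum_def)

section \<open>The main branch of a normal state\<close>

inductive reach :: "'a \<Rightarrow> ('a \<Rightarrow> 'a) \<Rightarrow> 'a \<Rightarrow> 'a \<Rightarrow> bool" for Tl f u where
  reach_refl: "reach Tl f u u"
| reach_step: "reach Tl f u c \<Longrightarrow> c \<noteq> Tl \<Longrightarrow> reach Tl f u (f c)"

lemma reach_first_step: "reach Tl f u v \<Longrightarrow> v = u \<or> u \<noteq> Tl \<and> reach Tl f (f u) v"
  by (induction rule: reach.induct) (auto intro: reach.intros)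

lemma reach_linear: "reach Tl f u c \<Longrightarrow> reach Tl f u a \<Longrightarrow> reach Tl f c a \<or> reach Tl f a c"
proof (induction rule: reach.induct)
  case reach_refl
  then show ?case by simp
next
  case (reach_step c)
  then consider "reach Tl f c a" | "reach Tl f a c" by blast
  then show ?case
  proof cases
    case 1
    with reach_first_step[OF this] reach_step.hyps show ?thesis by (auto intro: reach.intros)
  next
    case 2
    with reach_step.hyps show ?thesis by (auto intro: reach.intros)
  qed
qed

lemma on_main_iff_reach: "on_main Hd Tl S a \<longleftrightarrow> reach Tl (Nxt S) Hd a"
proof
  assume "on_main Hd Tl S a"
  then obtain m where "(Nxt S ^^ m) Hd = a" "\<forall>k<m. (Nxt S ^^ k) Hd \<noteq> Tl"
    unfolding on_main_def by blast
  moreover have "\<forall>k<m. (Nxt S ^^ k) Hd \<noteq> Tl \<Longrightarrow> reach Tl (Nxt S) Hd ((Nxt S ^^ m) Hd)" for m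
    by (induction m) (auto intro: reach.intros)
  ultimately show "reach Tl (Nxt S) Hd a" by blast
next
  assume "reach Tl (Nxt S) Hd a"
  then show "on_main Hd Tl S a"
  proof (induction rule: reach.induct)
    case reach_refl
    show ?case unfolding on_main_def by (auto intro: exI[of _ 0])
  next
    case (reach_step c)
    then obtain m where "(Nxt S ^^ m) Hd = c" "\<forall>k<m. (Nxt S ^^ k) Hd \<noteq> Tl"
      unfolding on_main_def by blast
    with reach_step.hyps(2) show ?case
      unfolding on_main_def by (auto intro!: exI[of _ "Suc m"] simp: less_Suc_eq)
  qed
qed

context
  fixes Hd Tl :: 'a and S :: "('a, 'p) st"
  assumes normal: "normal Hd Tl S"
begin

lemma normalD:
  "Hd \<in> Active S" "Tl \<in> Active S"
  "Val S Hd = MinusOne" "Val S Tl = Infty"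
  "a \<in> Active S \<Longrightarrow> a \<noteq> Tl \<Longrightarrow> Nxt S a \<in> Active S"
  "a \<in> Active S \<Longrightarrow> a \<noteq> Tl \<Longrightarrow> Val S a < Val S (Nxt S a)"
  using normal unfolding normal_def by auto

lemma Val_less_Num_not_Tl: "Val S a < Num k \<Longrightarrow> a \<noteq> Tl"
  using normalD(4) by auto

lemma reach_active: "reach Tl (Nxt S) u a \<Longrightarrow> u \<in> Active S \<Longrightarrow> a \<in> Active S"
  by (induction rule: reach.induct) (auto simp: normalD)

lemma main_active: "reach Tl (Nxt S) Hd a \<Longrightarrow> a \<in> Active S"
  using reach_active normalD(1) by blast

lemma reach_Val_mono: "reach Tl (Nxt S) u v \<Longrightarrow> u \<in> Active S \<Longrightarrow> Val S u \<le> Val S v"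
proof (induction rule: reach.induct)
  case reach_refl
  then show ?case by simp
next
  case (reach_step c)
  then have "Val S c < Val S (Nxt S c)" using reach_active normalD(6) by blast
  with reach_step show ?case by simp
qed

lemma reach_Val_strict_mono:
  assumes "reach Tl (Nxt S) u v" "u \<noteq> v" "u \<in> Active S"
  shows "Val S u < Val S v"
proof -
  from reach_first_step[OF assms(1)] assms(2) have "u \<noteq> Tl" "reach Tl (Nxt S) (Nxt S u) v"
    by auto
  with assms(3) show ?thesis
    using reach_Val_mono normalD(5,6) less_le_trans by blast
qed

lemma main_Val_inj:
  assumes "reach Tl (Nxt S) Hd c" "reach Tl (Nxt S) Hd a" "Val S c = Val S a"
  shows "c = a"
  using reach_linear[OF assms(1,2)] reach_Val_strict_mono assms main_active
  by (metis less_irrefl)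

lemma main_sorted:
  assumes "reach Tl (Nxt S) Hd c" "reach Tl (Nxt S) Hd a" "c \<noteq> Tl" "Val S c < Val S a"
  shows "Val S (Nxt S c) \<le> Val S a"
proof -
  have "c \<in> Active S" "a \<in> Active S" using assms(1,2) main_active by auto
  from reach_linear[OF assms(1,2)] show ?thesis
  proof
    assume "reach Tl (Nxt S) c a"
    with assms(4) have "reach Tl (Nxt S) (Nxt S c) a"
      using reach_first_step by fastforce
    with \<open>c \<in> Active S\<close> assms(3) show ?thesis using reach_Val_mono normalD(5) by blast
  next
    assume "reach Tl (Nxt S) a c"
    with \<open>a \<in> Active S\<close> assms(4) show ?thesis using reach_Val_mono by (simp add: leD)
  qed
qed

lemma main_pred_unique:
  assumes "reach Tl (Nxt S) Hd c" "c \<noteq> Tl" "reach Tl (Nxt S) Hd c'" "c' \<noteq> Tl"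
    and "Nxt S c = Nxt S c'"
  shows "c = c'"
proof (rule ccontr)
  assume "c \<noteq> c'"
  then have "Val S c \<noteq> Val S c'" using main_Val_inj assms(1,3) by blast
  moreover have "Val S c < Val S (Nxt S c)" "Val S c' < Val S (Nxt S c')"
    using assms main_active normalD(6) by blast+
  ultimately show False
    using main_sorted[OF assms(1,3,2)] main_sorted[OF assms(3,1,4)] assms(5)
    by (metis leD linorder_neq_iff)
qed

lemma main_insert:
  assumes pp: "reach Tl (Nxt S) Hd pp" "pp \<noteq> Tl" and a: "a \<notin> Active S"
  shows "reach Tl ((Nxt S)(pp := a, a := Nxt S pp)) Hd v \<longleftrightarrow> reach Tl (Nxt S) Hd v \<or> v = a"
proof -
  let ?f = "(Nxt S)(pp := a, a := Nxt S pp)"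
  have "a \<noteq> Tl" "a \<noteq> pp" using a pp main_active normalD(2) by auto
  then have f_pp: "?f pp = a" and f_a: "?f a = Nxt S pp" by simp_all
  have old: "reach Tl ?f Hd v" if "reach Tl (Nxt S) Hd v" for v
    using that
  proof (induction rule: reach.induct)
    case reach_refl
    show ?case by (rule reach_refl)
  next
    case (reach_step c)
    have "c \<noteq> a" using reach_step.hyps(1) main_active a by blast
    then have "c = pp \<or> ?f c = Nxt S c" by simp
    with reach_step \<open>a \<noteq> Tl\<close> show ?case
      by (metis f_pp f_a reach.reach_step)
  qed
  have new: "reach Tl (Nxt S) Hd v \<or> v = a" if "reach Tl ?f Hd v" for v
    using that
  proof (induction rule: reach.induct)
    case reach_refl
    show ?case by (simp add: reach.reach_refl)
  next
    case (reach_step c)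
    then show ?case using pp \<open>a \<noteq> Tl\<close>
      by (cases "c = a"; cases "c = pp") (auto intro: reach.intros)
  qed
  have "reach Tl ?f Hd a"
    using old[OF pp(1)] pp(2) f_pp by (metis reach.reach_step)
  with old new show ?thesis by blast
qed

lemma reach_unlinked:
  assumes pr: "reach Tl (Nxt S) Hd pr" "pr \<noteq> Tl" and cu: "Nxt S pr = cu" "cu \<noteq> Hd"
    and pred: "\<And>c. reach Tl (Nxt S) Hd c \<Longrightarrow> c \<noteq> Tl \<Longrightarrow> Nxt S c = cu \<Longrightarrow> c = pr"
    and v: "reach Tl (Nxt S) Hd v"
  shows "(v \<noteq> cu \<longrightarrow> reach Tl ((Nxt S)(pr := Nxt S cu)) Hd v) \<and>
    (v = cu \<longrightarrow> reach Tl ((Nxt S)(pr := Nxt S cu)) Hd pr)"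
  using v
proof (induction rule: reach.induct)
  case reach_refl
  show ?case using cu(2) by (blast intro: reach.reach_refl)
next
  case (reach_step c)
  consider "Nxt S c = cu" | "Nxt S c \<noteq> cu" "c = cu" | "Nxt S c \<noteq> cu" "c \<noteq> cu" by blast
  then show ?case
  proof cases
    case 1
    then show ?thesis using pred reach_step cu(1) by auto
  next
    case 2
    then show ?thesis using reach_step.IH pr(2) by (metis fun_upd_same reach.reach_step)
  next
    case 3
    then have "c \<noteq> pr" using cu by auto
    with 3 show ?thesis using reach_step by (metis fun_upd_other reach.reach_step)
  qed
qed

lemma main_remove:
  assumes pr: "reach Tl (Nxt S) Hd pr" "pr \<noteq> Tl" and cu: "Nxt S pr = cu" "cu \<noteq> Tl"
  shows "reach Tl ((Nxt S)(pr := Nxt S cu)) Hd v \<longleftrightarrow> reach Tl (Nxt S) Hd v \<and> v \<noteq> cu"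
proof -
  have "pr \<in> Active S" using pr main_active by blast
  then have "cu \<in> Active S" "Val S pr < Val S cu" using normalD(5,6) pr cu by blast+
  then have "cu \<noteq> Hd" "Nxt S cu \<noteq> cu" using normalD(3) normalD(6)[of cu] cu(2) by auto
  have cu_main: "reach Tl (Nxt S) Hd cu" using pr cu by (blast intro: reach_step)
  have pred: "c = pr" if "reach Tl (Nxt S) Hd c" "c \<noteq> Tl" "Nxt S c = cu" for c
    using main_pred_unique[OF that(1,2) pr] that cu by simp
  have "reach Tl (Nxt S) Hd v \<and> v \<noteq> cu" if "reach Tl ((Nxt S)(pr := Nxt S cu)) Hd v"
    using that
  proof (induction rule: reach.induct)
    case reach_refl
    show ?case using \<open>cu \<noteq> Hd\<close> by (blast intro: reach.reach_refl)
  next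
    case (reach_step c)
    then show ?case
      using cu_main cu \<open>Nxt S cu \<noteq> cu\<close> pred by (cases "c = pr") (auto intro: reach.intros)
  qed
  with reach_unlinked[OF pr cu(1) \<open>cu \<noteq> Hd\<close> pred] show ?thesis by blast
qed

end

definition traversal_inv :: "'a \<Rightarrow> ('a, 'p) st \<Rightarrow> 'p \<Rightarrow> bool" where
  "traversal_inv Hd S p \<longleftrightarrow>
     (PC S p = P32 \<longrightarrow> Curr S p = Hd) \<and>
     (PC S p = P33 \<longrightarrow> Curr S p \<in> Active S \<and> Val S (Curr S p) < Num (Xp S p)) \<and>
     (PC S p = P34 \<longrightarrow> Curr S p \<in> Active S) \<and>
     (PC S p = P35 \<longrightarrow> Curr S p \<in> Active S \<and> Num (Xp S p) \<le> Val S (Curr S p))"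

context
  fixes Hd Tl :: 'a and S S' :: "('a, 'p) st" and e :: "('a, 'p) label"
  assumes step: "step Hd Tl S e S'"
begin

lemma step_normal: "normal Hd Tl S"
  using step unfolding step_def by blast

lemma step_Nxt_unchanged:
  assumes "\<not> (ekind e = KAdd \<and> echi e = C0)" "\<not> (ekind e = KRem \<and> echi e = C1)"
  shows "Nxt S' = Nxt S"
  using step assms by (cases "ekind e") (auto simp: step_def Let_def)

lemma step_insert:
  assumes "ekind e = KAdd" "echi e = C0"
  obtains pp where "reach Tl (Nxt S) Hd pp" "pp \<noteq> Tl"
    "Val S pp < Num (Xp S (eproc e))" "Num (Xp S (eproc e)) < Val S (Nxt S pp)"
    "Nxt S' = (Nxt S)(pp := eadr e, eadr e := Nxt S pp)"
  using step assms by (auto simp: step_def Let_def on_main_iff_reach order_le_neq_trans)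

lemma step_add_found:
  assumes "ekind e = KAdd" "echi e = C1"
  shows "reach Tl (Nxt S) Hd (eadr e)" "Val S (eadr e) = Num (Xp S (eproc e))"
  using step assms by (auto simp: step_def Let_def on_main_iff_reach intro: reach_step)

lemma step_remove:
  assumes "ekind e = KRem" "echi e = C1"
  obtains pr where "reach Tl (Nxt S) Hd pr" "pr \<noteq> Tl" "Nxt S pr = eadr e" "pr \<noteq> eadr e"
    "eadr e \<noteq> Tl" "Val S (eadr e) = Num (Xp S (eproc e))" "Nxt S' = (Nxt S)(pr := Nxt S (eadr e))"
proof -
  obtain pr where pr: "reach Tl (Nxt S) Hd pr" "pr \<noteq> Tl" "Nxt S pr = eadr e"
    "Val S (eadr e) = Num (Xp S (eproc e))" "Nxt S' = (Nxt S)(pr := Nxt S (eadr e))"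
    using step assms by (auto simp: step_def Let_def on_main_iff_reach)
  moreover have "pr \<noteq> eadr e"
    using pr normalD(6)[OF step_normal] main_active[OF step_normal] by force
  moreover have "eadr e \<noteq> Tl" using pr(4) normalD(4)[OF step_normal] by auto
  ultimately show thesis using that by blast
qed

lemma step_remove_not_found:
  assumes "ekind e = KRem" "echi e = C0" "reach Tl (Nxt S) Hd a"
  shows "Val S a \<noteq> Num (Xp S (eproc e))"
  using step assms by (auto simp: step_def Let_def on_main_iff_reach)

lemma step_add_not_found:
  assumes "ekind e = KAdd" "echi e = C0" "reach Tl (Nxt S) Hd a"
  shows "Val S a \<noteq> Num (Xp S (eproc e))"
proof
  assume a: "Val S a = Num (Xp S (eproc e))"
  obtain pp where pp: "reach Tl (Nxt S) Hd pp" "pp \<noteq> Tl"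
    "Val S pp < Num (Xp S (eproc e))" "Num (Xp S (eproc e)) < Val S (Nxt S pp)"
    using step_insert[OF assms(1,2)] by metis
  then show False
    using main_sorted[OF step_normal pp(1) assms(3) pp(2)] a by simp
qed

lemma step_Active:
  "Active S' = (if ekind e = KAdd \<and> echi e = C0 then insert (eadr e) (Active S) else Active S)"
  using step by (cases "ekind e") (auto simp: step_def Let_def)

lemma step_Val:
  "Val S' = (if ekind e = KAdd \<and> echi e = C0 then (Val S)(eadr e := Num (Xp S (eproc e)))
             else Val S)"
  using step by (cases "ekind e") (auto simp: step_def Let_def)

lemma step_insert_fresh: "ekind e = KAdd \<Longrightarrow> echi e = C0 \<Longrightarrow> eadr e \<notin> Active S"
  using step by (auto simp: step_def Let_def)

lemma step_grows: "Active S \<subseteq> Active S'" "a \<in> Active S \<Longrightarrow> Val S' a = Val S a"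
  using step_insert_fresh by (auto simp: step_Active step_Val)

lemma step_other_process:
  assumes "eproc e \<noteq> p"
  shows "PC S' p = PC S p" "Curr S' p = Curr S p" "Xp S' p = Xp S p"
  using step assms by (cases "ekind e"; auto simp: step_def Let_def)+

lemma step_Xp: "ekind e \<noteq> KInv \<Longrightarrow> Xp S' = Xp S"
  using step by (cases "ekind e") (auto simp: step_def Let_def)

lemma step_Curr: "ekind e \<notin> {KL31, KL32, KL33} \<Longrightarrow> Curr S' = Curr S"
  using step by (cases "ekind e") (auto simp: step_def Let_def)

lemma step_begin_traversal: "ekind e = KL31 \<Longrightarrow> Curr S' (eproc e) = Hd"
  using step by (auto simp: step_def Let_def)

lemma traversal_inv_step:
  assumes inv: "\<And>q. traversal_inv Hd S q" and HT: "Hd \<noteq> Tl"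
  shows "traversal_inv Hd S' p"
proof (cases "eproc e = p")
  case False
  then show ?thesis
    using inv[of p] step_other_process[OF False] step_grows by (auto simp: traversal_inv_def)
next
  case True
  note normal = normalD[OF step_normal]
  show ?thesis
    using step inv[of p] True HT normal(1,3) normal(5)[of Hd] normal(5)[of "Curr S p"]
      Val_less_Num_not_Tl[OF step_normal, of "Curr S p"]
    unfolding step_def Let_def traversal_inv_def
    by (cases "ekind e") (auto simp: not_le)
qed

lemma step_traversal_advance:
  assumes "ekind e \<in> {KL32, KL33}" "traversal_inv Hd S (eproc e)" "Hd \<noteq> Tl"
  shows "Curr S (eproc e) \<noteq> Tl" "Val S (Curr S (eproc e)) < Num (Xp S (eproc e))"
    "Curr S' (eproc e) = Nxt S (Curr S (eproc e))"
proof -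
  have "PC S (eproc e) = (if ekind e = KL32 then P32 else P33)"
    and "Curr S' (eproc e) = Nxt S (Curr S (eproc e))"
    using step assms(1) by (auto simp: step_def Let_def)
  moreover from calculation(1) have "Val S (Curr S (eproc e)) < Num (Xp S (eproc e))"
    using assms(2) normalD(3)[OF step_normal] by (auto simp: traversal_inv_def split: if_splits)
  ultimately show "Curr S (eproc e) \<noteq> Tl" "Val S (Curr S (eproc e)) < Num (Xp S (eproc e))"
    "Curr S' (eproc e) = Nxt S (Curr S (eproc e))"
    using Val_less_Num_not_Tl[OF step_normal] by auto
qed

lemma step_return:
  assumes "ekind e = KL35" "traversal_inv Hd S (eproc e)"
  shows "Curr S (eproc e) \<in> Active S" "Num (Xp S (eproc e)) \<le> Val S (Curr S (eproc e))"
    "echi e = C1 \<longleftrightarrow> Val S (Curr S (eproc e)) = Num (Xp S (eproc e))"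
  using step assms unfolding step_def Let_def traversal_inv_def by auto

end

lemma enat_less_if_le: "i \<le> j \<Longrightarrow> enat j < n \<Longrightarrow> enat i < n"
  by (meson enat_ord_simps(1) le_less_trans)

(* Step e i exists for enat i < n, state S i for enat i \<le> n. *)
locale lazy_set_history =
  fixes Hd Tl :: 'a and S :: "nat \<Rightarrow> ('a, 'p) st" and e :: "nat \<Rightarrow> ('a, 'p) label"
    and n :: enat
  assumes history: "history Hd Tl S e n" and head_ne_tail: "Hd \<noteq> Tl"
begin

abbreviation on_main_at :: "nat \<Rightarrow> 'a \<Rightarrow> bool" where
  "on_main_at i \<equiv> reach Tl (Nxt (S i)) Hd"

abbreviation arg :: "nat \<Rightarrow> nat" where
  "arg i \<equiv> Xp (S i) (eproc (e i))"

definition inserts :: "nat \<Rightarrow> 'a \<Rightarrow> bool" where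
  "inserts i a \<longleftrightarrow> ekind (e i) = KAdd \<and> echi (e i) = C0 \<and> eadr (e i) = a"

definition removes :: "nat \<Rightarrow> 'a \<Rightarrow> bool" where
  "removes i a \<longleftrightarrow> ekind (e i) = KRem \<and> echi (e i) = C1 \<and> eadr (e i) = a"

lemma step_at: "enat i < n \<Longrightarrow> step Hd Tl (S i) (e i) (S (Suc i))"
  using history unfolding history_def by blast

lemma normal_at: "enat i < n \<Longrightarrow> normal Hd Tl (S i)"
  using step_normal[OF step_at] .

lemma active_stable:
  "i \<le> j \<Longrightarrow> enat j \<le> n \<Longrightarrow> a \<in> Active (S i) \<Longrightarrow> a \<in> Active (S j) \<and> Val (S j) a = Val (S i) a"
proof (induction j rule: dec_induct)
  case base
  then show ?case by simp
next
  case (step k)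
  then have "enat k < n" by (simp add: Suc_ile_eq)
  with step show ?case using step_grows[OF step_at] by (auto simp: less_imp_le)
qed

lemma traversal_inv_at: "enat i \<le> n \<Longrightarrow> traversal_inv Hd (S i) p"
proof (induction i arbitrary: p)
  case 0
  then show ?case using history by (simp add: history_def init_state_def traversal_inv_def)
next
  case (Suc i)
  then have "enat i < n" by (simp add: Suc_ile_eq)
  with Suc show ?case using traversal_inv_step[OF step_at] head_ne_tail less_imp_le by blast
qed

lemma inserted_fresh:
  assumes "enat i < n" "inserts i a"
  shows "a \<notin> Active (S i)" "a \<in> Active (S (Suc i))" "Val (S (Suc i)) a = Num (arg i)"
  using assms step_insert_fresh[OF step_at] step_Active[OF step_at] step_Val[OF step_at]
  by (auto simp: inserts_def)

lemma new_active_inserted: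
  "enat i < n \<Longrightarrow> a \<in> Active (S (Suc i)) \<Longrightarrow> a \<notin> Active (S i) \<Longrightarrow> inserts i a"
  using step_Active[OF step_at] by (auto simp: inserts_def split: if_splits)

lemma active_inserted:
  "enat i \<le> n \<Longrightarrow> a \<in> Active (S i) \<Longrightarrow> a \<noteq> Hd \<Longrightarrow> a \<noteq> Tl \<Longrightarrow>
    \<exists>j<i. inserts j a \<and> Val (S i) a = Num (arg j)"
proof (induction i)
  case 0
  then show ?case using history by (auto simp: history_def init_state_def)
next
  case (Suc i)
  then have i: "enat i < n" by (simp add: Suc_ile_eq)
  show ?case
  proof (cases "a \<in> Active (S i)")
    case True
    with Suc i obtain j where j: "j < i" "inserts j a" "Val (S i) a = Num (arg j)"
      using less_imp_le by blast
    moreover have "Val (S (Suc i)) a = Val (S i) a" using step_grows(2)[OF step_at[OF i] True] .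
    ultimately show ?thesis by (intro exI[of _ j]) auto
  next
    case False
    with Suc.prems i have "inserts i a" using new_active_inserted by blast
    then show ?thesis using inserted_fresh[OF i] by blast
  qed
qed

lemma inserts_unique: "inserts j a \<Longrightarrow> inserts j' a \<Longrightarrow> enat j < n \<Longrightarrow> enat j' < n \<Longrightarrow> j = j'"
proof (induction j j' rule: linorder_less_wlog)
  case (less j j')
  then have "a \<in> Active (S j')"
    using inserted_fresh(2) active_stable[of "Suc j" j'] by (simp add: Suc_leI less_imp_le)
  with less show ?case using inserted_fresh(1) by blast
qed auto

lemma activation_eq: "inserts j a \<Longrightarrow> enat j < n \<Longrightarrow> activation e n a = Act j"
  unfolding activation_def using inserts_unique by (auto simp: inserts_def)

lemma removes_on_main:
  assumes i: "enat i < n" and rem: "removes i a"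
  shows "on_main_at i a"
proof -
  from rem have "ekind (e i) = KRem" "echi (e i) = C1" by (simp_all add: removes_def)
  then obtain pr where "on_main_at i pr" "pr \<noteq> Tl" "Nxt (S i) pr = eadr (e i)"
    by (elim step_remove[OF step_at[OF i]])
  with rem show ?thesis by (metis reach_step removes_def)
qed

lemma main_step:
  assumes i: "enat i < n"
  shows "on_main_at (Suc i) v \<longleftrightarrow> on_main_at i v \<and> \<not> removes i v \<or> inserts i v"
proof -
  note normal = normal_at[OF i] and st = step_at[OF i]
  consider (ins) "ekind (e i) = KAdd" "echi (e i) = C0"
    | (rem) "ekind (e i) = KRem" "echi (e i) = C1"
    | (other) "\<not> (ekind (e i) = KAdd \<and> echi (e i) = C0)" "\<not> (ekind (e i) = KRem \<and> echi (e i) = C1)"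
    by blast
  then show ?thesis
  proof cases
    case ins
    then obtain pp where "reach Tl (Nxt (S i)) Hd pp" "pp \<noteq> Tl"
      "Nxt (S (Suc i)) = (Nxt (S i))(pp := eadr (e i), eadr (e i) := Nxt (S i) pp)"
      by (elim step_insert[OF st])
    with ins show ?thesis using main_insert[OF normal] step_insert_fresh[OF st]
      by (auto simp: inserts_def removes_def)
  next
    case rem
    then obtain pr where "reach Tl (Nxt (S i)) Hd pr" "pr \<noteq> Tl" "Nxt (S i) pr = eadr (e i)"
      "eadr (e i) \<noteq> Tl" "Nxt (S (Suc i)) = (Nxt (S i))(pr := Nxt (S i) (eadr (e i)))"
      by (elim step_remove[OF st])
    with rem show ?thesis using main_remove[OF normal] by (auto simp: inserts_def removes_def)
  next
    case other
    then show ?thesis using step_Nxt_unchanged[OF st] by (auto simp: inserts_def removes_def)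
  qed
qed

lemma Nxt_step_off_main:
  assumes i: "enat i < n" and off: "\<not> on_main_at (Suc i) a"
  shows "Nxt (S (Suc i)) a = Nxt (S i) a"
proof -
  note st = step_at[OF i]
  consider (ins) "ekind (e i) = KAdd" "echi (e i) = C0"
    | (rem) "ekind (e i) = KRem" "echi (e i) = C1"
    | (other) "\<not> (ekind (e i) = KAdd \<and> echi (e i) = C0)" "\<not> (ekind (e i) = KRem \<and> echi (e i) = C1)"
    by blast
  then show ?thesis
  proof cases
    case ins
    then obtain pp where "on_main_at i pp"
      "Nxt (S (Suc i)) = (Nxt (S i))(pp := eadr (e i), eadr (e i) := Nxt (S i) pp)"
      by (elim step_insert[OF st])
    with ins off show ?thesis using main_step[OF i] by (auto simp: inserts_def removes_def)
  next
    case rem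
    then obtain pr where "on_main_at i pr" "pr \<noteq> eadr (e i)"
      "Nxt (S (Suc i)) = (Nxt (S i))(pr := Nxt (S i) (eadr (e i)))"
      by (elim step_remove[OF st])
    with rem off show ?thesis using main_step[OF i] by (auto simp: removes_def)
  next
    case other
    then show ?thesis using step_Nxt_unchanged[OF st] by simp
  qed
qed

(* A removed node keeps its last link, so a traversal standing on it still reads a link that
   the main branch had at an earlier moment. *)
lemma Nxt_frozen_since_main:
  "t0 \<le> s \<Longrightarrow> enat s \<le> n \<Longrightarrow> on_main_at t0 c \<Longrightarrow>
    \<exists>t. t0 \<le> t \<and> t \<le> s \<and> on_main_at t c \<and> Nxt (S s) c = Nxt (S t) c"
proof (induction s rule: dec_induct)
  case base
  then show ?case by blast
next
  case (step k)
  then have k: "enat k < n" by (simp add: Suc_ile_eq)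
  show ?case
  proof (cases "on_main_at (Suc k) c")
    case True
    with step.hyps show ?thesis by (intro exI[of _ "Suc k"]) auto
  next
    case False
    with step k show ?thesis using Nxt_step_off_main less_imp_le by (metis le_SucI)
  qed
qed

lemma off_main_stays_off:
  "i \<le> j \<Longrightarrow> enat j \<le> n \<Longrightarrow> a \<in> Active (S i) \<Longrightarrow> \<not> on_main_at i a \<Longrightarrow> \<not> on_main_at j a"
proof (induction j rule: dec_induct)
  case base
  then show ?case by simp
next
  case (step k)
  then have k: "enat k < n" by (simp add: Suc_ile_eq)
  with step have "a \<in> Active (S k)" "\<not> on_main_at k a"
    using active_stable less_imp_le by blast+
  with k show ?case using main_step inserted_fresh(1) by blast
qed

lemma removed_stays_off: "removes k a \<Longrightarrow> k < i \<Longrightarrow> enat i \<le> n \<Longrightarrow> \<not> on_main_at i a"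
proof -
  assume rem: "removes k a" and "k < i" "enat i \<le> n"
  then have k: "enat k < n" by (meson enat_ord_simps(2) less_le_trans)
  have "a \<in> Active (S (Suc k))"
    using removes_on_main[OF k rem] main_active[OF normal_at[OF k]] step_grows[OF step_at[OF k]]
    by blast
  moreover have "\<not> on_main_at (Suc k) a"
    using main_step[OF k] rem by (auto simp: inserts_def removes_def)
  ultimately show ?thesis
    using off_main_stays_off[of "Suc k" i] \<open>k < i\<close> \<open>enat i \<le> n\<close> by simp
qed

lemma main_until_removed:
  "i \<le> j \<Longrightarrow> enat j \<le> n \<Longrightarrow> on_main_at i a \<Longrightarrow> (\<forall>k. i \<le> k \<longrightarrow> k < j \<longrightarrow> \<not> removes k a) \<Longrightarrow>
    on_main_at j a"
proof (induction j rule: dec_induct)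
  case base
  then show ?case by simp
next
  case (step k)
  then have "enat k < n" by (simp add: Suc_ile_eq)
  with step show ?case using main_step less_imp_le by auto
qed

lemma main_since_insertion:
  assumes "enat j < n" "inserts j a" "Suc j \<le> u" "enat u \<le> n" "\<forall>k<u. \<not> removes k a"
  shows "on_main_at u a \<and> Val (S u) a = Num (arg j)"
  using main_until_removed[OF assms(3,4) main_step[OF assms(1), THEN iffD2]]
    active_stable[OF assms(3,4)] inserted_fresh[OF assms(1,2)] assms(2,5) by auto

lemma update_success_witness:
  assumes i: "enat i < n" and kind: "ekind (e i) \<in> {KAdd, KRem}" and ok: "echi (e i) = C1"
  shows "on_main_at i (eadr (e i))" "\<exists>j<i. inserts j (eadr (e i)) \<and> arg j = arg i"
proof -
  note st = step_at[OF i]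
  have found: "on_main_at i (eadr (e i)) \<and> Val (S i) (eadr (e i)) = Num (arg i)"
  proof (cases "ekind (e i) = KAdd")
    case True
    with ok show ?thesis using step_add_found[OF st] by blast
  next
    case False
    with kind ok have "ekind (e i) = KRem" "echi (e i) = C1" by simp_all
    then obtain pr where "on_main_at i pr" "pr \<noteq> Tl" "Nxt (S i) pr = eadr (e i)"
      "Val (S i) (eadr (e i)) = Num (arg i)"
      by (elim step_remove[OF st])
    then show ?thesis using reach.reach_step[of Tl "Nxt (S i)" Hd pr] by simp
  qed
  then show "on_main_at i (eadr (e i))" by blast
  have "eadr (e i) \<in> Active (S i)" "eadr (e i) \<noteq> Hd" "eadr (e i) \<noteq> Tl"
    using found main_active[OF normal_at[OF i]] normalD(3,4)[OF normal_at[OF i]] by auto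
  with found show "\<exists>j<i. inserts j (eadr (e i)) \<and> arg j = arg i"
    using active_inserted i less_imp_le by fastforce
qed

lemma removal_of_activation:
  assumes k: "enat k < n" "ekind (e k) = KRem" "echi (e k) = C1"
    and act: "activation e n (eadr (e k)) = Act j" and ins: "inserts j a" "enat j < n"
  shows "removes k a"
proof -
  obtain j' where "j' < k" "inserts j' (eadr (e k))"
    using update_success_witness(2)[OF k(1) _ k(3)] k(2) by auto
  moreover from this have "activation e n (eadr (e k)) = Act j'"
    using activation_eq k(1) enat_less_if_le[of j' k] by simp
  ultimately show ?thesis using act ins k by (auto simp: inserts_def removes_def)
qed

lemma update_no_C0_if_on_main:
  assumes "enat i < n" "ekind (e i) \<in> {KAdd, KRem}" "on_main_at i a" "Val (S i) a = Num (arg i)"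
  shows "echi (e i) \<noteq> C0"
  using assms step_add_not_found[OF step_at] step_remove_not_found[OF step_at] by blast

section \<open>CONTAINS traversals\<close>

lemma Val_Nxt_le_main_above:
  assumes "t0 \<le> s" "enat s < n" "on_main_at t0 c" "c \<noteq> Tl"
    and a_main: "\<forall>u. t0 \<le> u \<longrightarrow> u \<le> s \<longrightarrow> on_main_at u a"
    and below: "Val (S s) c < Val (S s) a"
  shows "Val (S (Suc s)) (Nxt (S s) c) \<le> Val (S s) a"
proof -
  obtain t where t: "t0 \<le> t" "t \<le> s" "on_main_at t c" "Nxt (S s) c = Nxt (S t) c"
    using Nxt_frozen_since_main assms(1-3) less_imp_le by blast
  have tn: "enat t < n" using t(2) assms(2) enat_less_if_le by blast
  note normal = normal_at[OF tn]
  have "on_main_at t a" using a_main t(1,2) by simp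
  have s_le: "enat s \<le> n" "enat (Suc s) \<le> n" using assms(2) by (simp_all add: Suc_ile_eq less_imp_le)
  have "Val (S s) c = Val (S t) c" "Val (S s) a = Val (S t) a"
    using active_stable[OF t(2) s_le(1)] main_active[OF normal] t(3) \<open>on_main_at t a\<close> by auto
  moreover have "Val (S t) (Nxt (S t) c) \<le> Val (S t) a"
    using main_sorted[OF normal t(3) \<open>on_main_at t a\<close> assms(4)] below calculation by simp
  moreover have "Val (S (Suc s)) (Nxt (S t) c) = Val (S t) (Nxt (S t) c)"
    using active_stable[of t "Suc s"] t(2) s_le(2)
      normalD(5)[OF normal main_active[OF normal t(3)] assms(4)] by simp
  ultimately show ?thesis using t(4) by simp
qed

context
  fixes b r :: nat
  assumes cnt: "is_cnt_exec e n b r"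
begin

abbreviation proc :: 'p where
  "proc \<equiv> eproc (e b)"

abbreviation curr :: "nat \<Rightarrow> 'a" where
  "curr s \<equiv> Curr (S s) proc"

lemma cnt_bounds: "b < r" "enat r < n" "enat b < n"
  using cnt enat_less_if_le[of b r n] by (auto simp: is_cnt_exec_def)

lemma cnt_own_steps:
  "b < s \<Longrightarrow> s < r \<Longrightarrow> eproc (e s) = proc \<Longrightarrow> ekind (e s) \<in> {KL32, KL33, KL34}"
  using cnt by (auto simp: is_cnt_exec_def)

lemma traversal_Xp: "b \<le> s \<Longrightarrow> s \<le> r \<Longrightarrow> Xp (S s) proc = arg b"
proof (induction s rule: dec_induct)
  case base
  then show ?case by simp
next
  case (step k)
  then have k: "enat k < n" using cnt_bounds(2) enat_less_if_le[of k r n] by simp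
  have "ekind (e k) \<noteq> KInv" if "eproc (e k) = proc"
  proof (cases "k = b")
    case True
    then show ?thesis using cnt by (simp add: is_cnt_exec_def)
  next
    case False
    then show ?thesis using cnt_own_steps[of k] step that by auto
  qed
  with step k show ?case
    using step_other_process(3)[OF step_at[OF k]] step_Xp[OF step_at[OF k]] by fastforce
qed

lemma traversal_step:
  assumes "b < s" "s < r"
  shows "curr (Suc s) = curr s \<or>
    curr s \<noteq> Tl \<and> Val (S s) (curr s) < Num (arg b) \<and> curr (Suc s) = Nxt (S s) (curr s)"
proof -
  have s: "enat s < n" using assms cnt_bounds(2) enat_less_if_le[of s r n] by simp
  note st = step_at[OF s]
  show ?thesis
  proof (cases "eproc (e s) = proc \<and> ekind (e s) \<in> {KL32, KL33}")
    case True
    then show ?thesis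
      using step_traversal_advance[OF st _ traversal_inv_at head_ne_tail] s
        traversal_Xp[of s] assms by (simp add: less_imp_le)
  next
    case False
    then have "ekind (e s) \<notin> {KL31, KL32, KL33} \<or> eproc (e s) \<noteq> proc"
      using cnt_own_steps[OF assms] by auto
    then show ?thesis using step_Curr[OF st] step_other_process(2)[OF st] by auto
  qed
qed

lemma traversal_start: "curr (Suc b) = Hd"
  using cnt cnt_bounds step_begin_traversal[OF step_at] by (auto simp: is_cnt_exec_def)

lemma traversal_on_main: "b < s \<Longrightarrow> s \<le> r \<Longrightarrow> \<exists>t. b \<le> t \<and> t \<le> s \<and> on_main_at t (curr s)"
proof (induction s)
  case 0
  then show ?case by simp
next
  case (Suc s)
  show ?case
  proof (cases "s = b")
    case True
    then show ?thesis using traversal_start by (auto intro: reach.reach_refl)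
  next
    case False
    with Suc.prems have s: "b < s" "s < r" by auto
    with Suc.IH obtain t0 where t0: "b \<le> t0" "t0 \<le> s" "on_main_at t0 (curr s)" by auto
    from traversal_step[OF s] show ?thesis
    proof
      assume "curr (Suc s) = curr s"
      with t0 show ?thesis by auto
    next
      assume moved: "curr s \<noteq> Tl \<and> Val (S s) (curr s) < Num (arg b) \<and>
        curr (Suc s) = Nxt (S s) (curr s)"
      have "enat s \<le> n" using s cnt_bounds(2) enat_less_if_le[of s r n] less_imp_le by simp
      then obtain t where "t0 \<le> t" "t \<le> s" "on_main_at t (curr s)"
          "Nxt (S s) (curr s) = Nxt (S t) (curr s)"
        using Nxt_frozen_since_main t0(2,3) by blast
      with t0(1) moved show ?thesis by (metis le_SucI order_trans reach.reach_step)
    qed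
  qed
qed

lemma traversal_bounded:
  assumes a_main: "\<forall>u. b \<le> u \<longrightarrow> u \<le> r \<longrightarrow> on_main_at u a"
    and a_val: "Val (S b) a = Num (arg b)"
  shows "b < s \<Longrightarrow> s \<le> r \<Longrightarrow> Val (S s) (curr s) \<le> Num (arg b)"
proof (induction s)
  case 0
  then show ?case by simp
next
  case (Suc s)
  have sn: "enat (Suc s) < n" using Suc.prems cnt_bounds(2) enat_less_if_le[of "Suc s" r n] by simp
  then have sn': "enat s < n" using enat_less_if_le[of s "Suc s"] by simp
  show ?case
  proof (cases "s = b")
    case True
    then show ?thesis using traversal_start normalD(3)[OF normal_at[OF sn]] by (simp add: le_less)
  next
    case False
    with Suc.prems have s: "b < s" "s < r" by auto
    obtain t0 where t0: "b \<le> t0" "t0 \<le> s" "on_main_at t0 (curr s)"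
      using traversal_on_main[OF s(1)] s(2) by auto
    have t0n: "enat t0 < n" using t0(2) sn' enat_less_if_le by blast
    have c_active: "curr s \<in> Active (S s)"
      using active_stable[OF t0(2) _ main_active[OF normal_at[OF t0n] t0(3)]] sn' less_imp_le
      by blast
    have "a \<in> Active (S b)"
      using a_main cnt_bounds(1) main_active[OF normal_at[OF cnt_bounds(3)]] by simp
    then have a_s: "Val (S s) a = Num (arg b)"
      using active_stable[of b s] s sn' a_val by (simp add: less_imp_le)
    from traversal_step[OF s] show ?thesis
    proof
      assume "curr (Suc s) = curr s"
      then show ?thesis
        using Suc.IH s step_grows(2)[OF step_at[OF sn'] c_active] by simp
    next
      assume moved: "curr s \<noteq> Tl \<and> Val (S s) (curr s) < Num (arg b) \<and>
        curr (Suc s) = Nxt (S s) (curr s)"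
      have "\<forall>u. t0 \<le> u \<longrightarrow> u \<le> s \<longrightarrow> on_main_at u a" using a_main t0(1) s(2) by simp
      from Val_Nxt_le_main_above[OF t0(2) sn' t0(3) _ this] moved a_s show ?thesis by simp
    qed
  qed
qed

lemma contains_found:
  assumes "echi (e r) = C1"
  shows "\<exists>j<r. inserts j (curr r) \<and> arg j = arg b"
proof -
  have "eproc (e r) = proc" "ekind (e r) = KL35" using cnt by (auto simp: is_cnt_exec_def)
  then have "curr r \<in> Active (S r)" "Val (S r) (curr r) = Num (arg b)"
    using step_return[OF step_at[OF cnt_bounds(2)]] traversal_inv_at[of r] assms
      traversal_Xp[of r] cnt_bounds(1) cnt_bounds(2) less_imp_le by auto
  moreover have "curr r \<noteq> Hd" "curr r \<noteq> Tl"
    using calculation(2) normalD(3,4)[OF normal_at[OF cnt_bounds(2)]] by auto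
  ultimately show ?thesis
    using active_inserted cnt_bounds(2) less_imp_le by fastforce
qed

lemma contains_C1_if_on_main:
  assumes "\<forall>u. b \<le> u \<longrightarrow> u \<le> r \<longrightarrow> on_main_at u a" "Val (S b) a = Num (arg b)"
  shows "echi (e r) = C1"
proof -
  have "eproc (e r) = proc" "ekind (e r) = KL35" using cnt by (auto simp: is_cnt_exec_def)
  moreover have "Val (S r) (curr r) \<le> Num (arg b)"
    using traversal_bounded[OF assms] cnt_bounds(1) by simp
  ultimately show ?thesis
    using step_return[OF step_at[OF cnt_bounds(2)]] traversal_inv_at[of r]
      traversal_Xp[of r] cnt_bounds(1) cnt_bounds(2) less_imp_le by fastforce
qed

end

abbreviation M :: "hev lsstruct" where
  "M \<equiv> MH S e n"

lemma A0_MH: "A0 M"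
  unfolding A0_def MH_def using cnt_bounds by (auto elim!: hlt.elims)

lemma success_witness:
  assumes "A \<in> Ev M" "Op M C1 A"
  obtains j a b r t where "hBegin A = Act b" "hEnd A = Act r" "hgamma S e n A = Act j"
    "inserts j a" "j < r" "enat j < n" "arg j = hval S e A" "b \<le> t" "t \<le> r" "on_main_at t a"
proof (cases A)
  case (Act i)
  with assms have i: "enat i < n" "ekind (e i) \<in> {KAdd, KRem}" "echi (e i) = C1"
    by (auto simp: MH_def Op_def)
  then obtain j where "j < i" "inserts j (eadr (e i))" "arg j = arg i"
    using update_success_witness(2) by blast
  moreover from calculation have "enat j < n" using i(1) enat_less_if_le[of j i n] by simp
  ultimately show thesis
    using that[of i i j "eadr (e i)" i] Act activation_eq update_success_witness(1)[OF i] by simp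
next
  case (CntEx b r)
  with assms have cnt: "is_cnt_exec e n b r" "echi (e r) = C1" by (auto simp: MH_def Op_def)
  then obtain j where "j < r" "inserts j (curr b r)" "arg j = arg b"
    using contains_found by blast
  moreover from calculation have "enat j < n" using cnt_bounds(2)[OF cnt(1)] enat_less_if_le[of j r n]
    by simp
  moreover obtain t where "b \<le> t" "t \<le> r" "on_main_at t (curr b r)"
    using traversal_on_main[OF cnt(1) cnt_bounds(1)[OF cnt(1)]] by blast
  moreover have "eproc (e r) = eproc (e b)" using cnt(1) by (simp add: is_cnt_exec_def)
  ultimately show thesis using that[of b r j "curr b r" t] CntEx activation_eq by simp
qed

lemma A1_MH: "A1 M"
  unfolding A1_def
proof (intro ballI impI)
  fix A assume "A \<in> Ev M" "Op M C1 A"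
  then obtain j a b r t where A: "hBegin A = Act b" "hEnd A = Act r" "hgamma S e n A = Act j"
    "inserts j a" "j < r" "enat j < n" "arg j = hval S e A" "b \<le> t" "t \<le> r" "on_main_at t a"
    by (rule success_witness)
  have "enat r < n" using A(2) \<open>A \<in> Ev M\<close> by (cases A) (auto simp: MH_def is_cnt_exec_def)
  then have "enat t \<le> n" using A(9) enat_less_if_le[of t r n] by (simp add: less_imp_le)
  have no_removal: False
    if "R \<in> Ev M" "IsRem M R" "chi M R = C1" "gamma M R = Act j" "evless M R A" for R
  proof -
    from that A(1) obtain k where "enat k < n" "ekind (e k) = KRem" "echi (e k) = C1"
      "activation e n (eadr (e k)) = Act j" "k < b"
      by (cases R) (auto simp: MH_def evless_def)
    then have "removes k a" "k < t" using removal_of_activation A(4,6,8) by auto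
    then show False using removed_stays_off \<open>enat t \<le> n\<close> A(10) by blast
  qed
  show "gamma M A \<in> Ev M \<and> IsAdd M (gamma M A) \<and> chi M (gamma M A) = C0 \<and>
    val M (gamma M A) = val M A \<and> evless M (gamma M A) (End M A) \<and>
    \<not> (\<exists>R\<in>Ev M. IsRem M R \<and> chi M R = C1 \<and> gamma M R = gamma M A \<and>
      evless M (gamma M A) R \<and> evless M R A)"
    using A no_removal by (auto simp: MH_def evless_def inserts_def)
qed

lemma A2_MH: "A2 M"
  unfolding A2_def
proof (intro ballI impI)
  fix B A assume "B \<in> Ev M" "A \<in> Ev M"
    and BA: "Op M C0 B \<and> IsAdd M A \<and> chi M A = C0 \<and> evless M A B \<and> val M A = val M B"
  then obtain j where j: "A = Act j" "enat j < n" "inserts j (eadr (e j))"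
    by (cases A) (auto simp: MH_def inserts_def)
  define a where "a = eadr (e j)"
  obtain rB where rB: "hEnd B = Act rB" "enat rB < n" "j < rB"
    using \<open>B \<in> Ev M\<close> BA j(1) by (cases B) (auto simp: MH_def evless_def is_cnt_exec_def)
  show "\<exists>R\<in>Ev M. IsRem M R \<and> chi M R = C1 \<and> gamma M R = A \<and> evless M R (End M B)"
  proof (rule ccontr)
    assume none: "\<not> ?thesis"
    have "\<not> removes k a" if "k < rB" for k
    proof
      assume "removes k a"
      with that rB(2) have "Act k \<in> Ev M \<and> IsRem M (Act k) \<and> chi M (Act k) = C1 \<and>
        gamma M (Act k) = A \<and> evless M (Act k) (End M B)"
        using activation_eq[OF j(3,2)] j(1) rB(1) enat_less_if_le[of k rB n]
        by (auto simp: MH_def evless_def removes_def a_def)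
      with none show False by blast
    qed
    then have a_main: "on_main_at u a \<and> Val (S u) a = Num (arg j)" if "Suc j \<le> u" "u \<le> rB" for u
      using main_since_insertion[OF j(2,3) that(1)] that(2) rB(2) enat_less_if_le[of u rB n]
      by (simp add: a_def less_imp_le)
    show False
    proof (cases B)
      case (Act i)
      with BA j(1) rB have "ekind (e i) \<in> {KAdd, KRem}" "echi (e i) = C0" "arg i = arg j" "i = rB"
        by (auto simp: MH_def Op_def)
      then show False using update_no_C0_if_on_main[of i a] a_main[of i] rB by auto
    next
      case (CntEx b r)
      with \<open>B \<in> Ev M\<close> BA j(1) rB have cnt: "is_cnt_exec e n b r"
        and "echi (e r) = C0" "arg j = arg b" "j < b" "r = rB"
        by (auto simp: MH_def Op_def evless_def)
      moreover from calculation have "\<forall>u. b \<le> u \<longrightarrow> u \<le> r \<longrightarrow> on_main_at u a"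
        "Val (S b) a = Num (arg b)"
        using a_main cnt_bounds(1)[OF cnt] by (auto simp: Suc_le_eq)
      ultimately show False using contains_C1_if_on_main[of b r a] by simp
    qed
  qed
qed

end

theorem theorem4p9:
  fixes Hd Tl :: 'a
    and S :: "nat \<Rightarrow> ('a, 'p) st"
    and e :: "nat \<Rightarrow> ('a, 'p) label"
    and n :: enat
  assumes "countable (UNIV :: 'a set)" and "infinite (UNIV :: 'a set)" and "Hd \<noteq> Tl"
    and "history Hd Tl S e n"
  shows "A0 (MH S e n) \<and> A1 (MH S e n) \<and> A2 (MH S e n)"
proof -
  \<comment> \<open>Not needed: the hypotheses on the address space only ensure that AD finds fresh addresses.\<close>
  interpret lazy_set_history Hd Tl S e n
    using assms(3,4) by unfold_locales
  show ?thesis using A0_MH A1_MH A2_MH by blast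
qed

end
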